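(* Let $G$ be an entire function such that the operator $A$ on $\mathcal{F}^2$ given by $Af=Gf'$ (for $f$ in its domain) is the generator of a quasicontractive $C_0$ semigroup on $\mathcal{F}^2$. Then $G$ is a polynomial of degree at most $1$, say $G(z)=az+b$, with $\operatorname{Re}a\le 0$.
   Context: $\mathcal{F}^2$ is the Hilbert space of entire functions $f$ with $\|f\|_2^2=\frac{1}{\pi}\int_{\mathbb{C}}|f(z)|^2e^{-|z|^2}\,dm(z)<\infty$; the functions $z^n/\sqrt{n!}$, $n\ge0$, form an orthonormal basis. A $C_0$ semigroup $(T_t)_{t\ge0}$ is quasicontractive if there is $\omega\in\mathbb{R}$ with $\|T_t\|\le e^{\omega t}$ for all $t\ge0$. The generator is $Ax=\lim_{t\to0}(T_tx-x)/t$ on the set where the limit exists. *)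

theory Defs
  imports "HOL-Complex_Analysis.Complex_Analysis"
begin

definition fock_integral :: "(complex \<Rightarrow> complex) \<Rightarrow> ennreal" where
  "fock_integral f = (\<integral>\<^sup>+ z. ennreal ((cmod (f z))\<^sup>2 * exp (- (cmod z)\<^sup>2)) \<partial>lborel)"

definition Fock2 :: "(complex \<Rightarrow> complex) set" where
  "Fock2 = {f. f holomorphic_on UNIV \<and> fock_integral f < \<infinity>}"

definition fock_norm :: "(complex \<Rightarrow> complex) \<Rightarrow> real" where
  "fock_norm f = sqrt (enn2real (fock_integral f) / pi)"

text \<open>A C_0 semigroup of bounded linear operators on F^2 (operators given as maps on
  functions, relevant only on F^2).\<close>

definition C0_semigroup_Fock :: "(real \<Rightarrow> (complex \<Rightarrow> complex) \<Rightarrow> (complex \<Rightarrow> complex)) \<Rightarrow> bool" where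
  "C0_semigroup_Fock T \<longleftrightarrow>
     (\<forall>t\<ge>0. \<forall>f\<in>Fock2. T t f \<in> Fock2) \<and>
     (\<forall>t\<ge>0. \<forall>f\<in>Fock2. \<forall>g\<in>Fock2. \<forall>c::complex.
         T t (\<lambda>z. c * f z + g z) = (\<lambda>z. c * T t f z + T t g z)) \<and>
     (\<forall>t\<ge>0. \<exists>C::real. \<forall>f\<in>Fock2. fock_norm (T t f) \<le> C * fock_norm f) \<and>
     (\<forall>f\<in>Fock2. T 0 f = f) \<and>
     (\<forall>s\<ge>0. \<forall>t\<ge>0. \<forall>f\<in>Fock2. T (s + t) f = T s (T t f)) \<and>
     (\<forall>f\<in>Fock2. ((\<lambda>t. fock_norm (\<lambda>z. T t f z - f z)) \<longlongrightarrow> 0) (at_right 0))"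

definition quasicontractive_Fock :: "(real \<Rightarrow> (complex \<Rightarrow> complex) \<Rightarrow> (complex \<Rightarrow> complex)) \<Rightarrow> bool" where
  "quasicontractive_Fock T \<longleftrightarrow>
     (\<exists>\<omega>::real. \<forall>t\<ge>0. \<forall>f\<in>Fock2. fock_norm (T t f) \<le> exp (\<omega> * t) * fock_norm f)"

definition gen_limit :: "(real \<Rightarrow> (complex \<Rightarrow> complex) \<Rightarrow> (complex \<Rightarrow> complex)) \<Rightarrow>
    (complex \<Rightarrow> complex) \<Rightarrow> (complex \<Rightarrow> complex) \<Rightarrow> bool" where
  "gen_limit T f g \<longleftrightarrow> g \<in> Fock2 \<and>
     ((\<lambda>t. fock_norm (\<lambda>z. (T t f z - f z) / complex_of_real t - g z)) \<longlongrightarrow> 0) (at_right 0)"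

definition gen_domain :: "(real \<Rightarrow> (complex \<Rightarrow> complex) \<Rightarrow> (complex \<Rightarrow> complex)) \<Rightarrow>
    (complex \<Rightarrow> complex) set" where
  "gen_domain T = {f \<in> Fock2. \<exists>g. gen_limit T f g}"

definition is_generator_Fock :: "(real \<Rightarrow> (complex \<Rightarrow> complex) \<Rightarrow> (complex \<Rightarrow> complex)) \<Rightarrow>
    (complex \<Rightarrow> complex) set \<Rightarrow> ((complex \<Rightarrow> complex) \<Rightarrow> (complex \<Rightarrow> complex)) \<Rightarrow> bool" where
  "is_generator_Fock T D A \<longleftrightarrow> gen_domain T = D \<and> (\<forall>f\<in>D. gen_limit T f (A f))"

end

theory Submission
  imports Defs "HOL-Probability.Probability"
begin

text \<open>Point evaluation is bounded on \<open>F\<^sup>2\<close>: \<open>|f w|\<^sup>2 \<le> exp (|w|\<^sup>2) * \<parallel>f\<parallel>\<^sup>2\<close>. At \<open>w = 0\<close>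
  this is the sub-mean value property of \<open>|f|\<^sup>2\<close> on circles, averaged against the rotation
  invariant Gaussian weight; the Weyl operator \<open>f \<mapsto> f (w + z) * exp (- cnj w * z)\<close> moves \<open>w\<close>
  to \<open>0\<close>. Hence \<open>F\<^sup>2\<close> is a Banach space on which evaluation and differentiation at a point
  are bounded functionals.

  For every \<open>x\<close> the orbit integral \<open>\<integral>\<^sub>0\<^sup>\<tau> T\<^sub>s x ds\<close> lies in the domain of the generator,
  which maps it to \<open>T\<^sub>\<tau> x - x\<close>; dividing by \<open>\<tau>\<close> and letting \<open>\<tau> \<rightarrow> 0\<close> gives
  \<open>((T\<^sub>\<tau> x) w - x w) / \<tau> \<rightarrow> G w * x' w\<close> for every \<open>x\<close>, in the domain or not. For the
  reproducing kernel \<open>K\<^sub>w z = exp (cnj w * z)\<close>, with \<open>K\<^sub>w w = \<parallel>K\<^sub>w\<parallel>\<^sup>2 = exp (|w|\<^sup>2)\<close>,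
  quasicontractivity bounds \<open>Re ((T\<^sub>\<tau> K\<^sub>w) w)\<close> by \<open>exp (\<omega> * \<tau>) * K\<^sub>w w\<close>, so
  \<open>Re (G w * cnj w) \<le> \<omega>\<close> for all \<open>w\<close>. Then \<open>(G z - G 0) / z\<close> is entire with real part bounded
  above, hence constant by Liouville's theorem, and the bound forces \<open>Re a \<le> 0\<close>.\<close>

section \<open>Lebesgue measure on the complex plane\<close>

text \<open>The library proves invariance of Lebesgue measure under orthogonal maps only on
  \<open>real^'n\<close>, so rotations of \<open>\<complex>\<close> are handled through the isometry \<open>real^2 \<cong> \<complex>\<close>.\<close>

definition complex_of_vec2 :: "real^2 \<Rightarrow> complex" where
  "complex_of_vec2 v = Complex (v $ 1) (v $ 2)"

lemma continuous_on_complex_of_vec2: "continuous_on UNIV complex_of_vec2"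
proof -
  have eq: "complex_of_vec2 = (\<lambda>v. complex_of_real (v $ 1) + \<i> * complex_of_real (v $ 2))"
    by (simp add: fun_eq_iff complex_of_vec2_def complex_eq_iff)
  show ?thesis
    unfolding eq by (intro continuous_intros)
qed

lemma complex_of_vec2_measurable [measurable]: "complex_of_vec2 \<in> borel_measurable borel"
  using continuous_on_complex_of_vec2 borel_measurable_continuous_onI by blast

lemma Basis_vec2: "(Basis :: (real^2) set) = {axis 1 1, axis 2 1}"
  by (auto simp: Basis_vec_def) (metis exhaust_2)

lemma prod_Basis_vec2: "(\<Prod>b\<in>(Basis :: (real^2) set). f b) = f (axis 1 1) * f (axis 2 1)"
  by (simp add: Basis_vec2 axis_eq_axis)

lemma lborel_distr_complex_of_vec2: "distr lborel borel complex_of_vec2 = lborel"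
proof (rule lborel_eqI[symmetric])
  fix l u :: complex
  assume lu: "\<And>b. b \<in> Basis \<Longrightarrow> l \<bullet> b \<le> u \<bullet> b"
  have le: "Re l \<le> Re u" "Im l \<le> Im u"
    using lu[of 1] lu[of \<i>] by (auto simp: Basis_complex_def)
  have "complex_of_vec2 -` box l u = box (vector [Re l, Im l]) (vector [Re u, Im u])"
    by (auto simp: mem_box_cart mem_box Basis_complex_def complex_of_vec2_def forall_2)
  then have "emeasure (distr lborel borel complex_of_vec2) (box l u)
      = emeasure lborel (box (vector [Re l, Im l]) (vector [Re u, Im u]) :: (real^2) set)"
    by (simp add: emeasure_distr)
  also have "\<dots> = (\<Prod>b\<in>Basis. (vector [Re u, Im u] - vector [Re l, Im l] :: real^2) \<bullet> b)"
    by (rule emeasure_lborel_box) (use le in \<open>auto simp: Basis_vec2 inner_axis\<close>)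
  also have "\<dots> = ennreal ((Re u - Re l) * (Im u - Im l))"
    by (simp add: prod_Basis_vec2 inner_axis)
  finally show "emeasure (distr lborel borel complex_of_vec2) (box l u) = (\<Prod>b\<in>Basis. (u - l) \<bullet> b)"
    by (simp add: Basis_complex_def)
qed simp

definition rotation_vec2 :: "real \<Rightarrow> real^2 \<Rightarrow> real^2" where
  "rotation_vec2 t v = (\<chi> i. if i = 1 then cos t * v $ 1 - sin t * v $ 2 else sin t * v $ 1 + cos t * v $ 2)"

lemma rotation_vec2_nth [simp]:
  "rotation_vec2 t v $ 1 = cos t * v $ 1 - sin t * v $ 2"
  "rotation_vec2 t v $ 2 = sin t * v $ 1 + cos t * v $ 2"
  by (simp_all add: rotation_vec2_def)

lemma complex_of_vec2_rotation: "complex_of_vec2 (rotation_vec2 t v) = cis t * complex_of_vec2 v"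
  by (simp add: complex_of_vec2_def complex_eq_iff)

lemma rotation_vec2_minus_inverse: "rotation_vec2 (- t) (rotation_vec2 t v) = v"
proof -
  have "cos t * cos t + sin t * sin t = 1"
    by (simp add: sin_cos_squared_add3)
  then have "cos t * (cos t * a - sin t * b) + sin t * (sin t * a + cos t * b) = a"
    and "- (sin t * (cos t * a - sin t * b)) + cos t * (sin t * a + cos t * b) = b" for a b :: real
    by algebra+
  then show ?thesis
    by (simp add: vec_eq_iff forall_2)
qed

lemma orthogonal_transformation_rotation_vec2: "orthogonal_transformation (rotation_vec2 t)"
proof -
  have "linear (rotation_vec2 t)"
    by (rule linearI) (simp_all add: vec_eq_iff rotation_vec2_def algebra_simps)
  moreover have "cos t * cos t + sin t * sin t = 1"
    by (simp add: sin_cos_squared_add3)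
  then have "(x * a - y * b) * (x * c - y * d) + (y * a + x * b) * (y * c + x * d) = a * c + b * d"
    if "x = cos t" "y = sin t" for x y a b c d :: real
    using that by algebra
  then have "rotation_vec2 t v \<bullet> rotation_vec2 t w = v \<bullet> w" for v w
    by (simp add: inner_vec_def sum_2)
  ultimately show ?thesis
    by (simp add: orthogonal_transformation_def)
qed

lemma continuous_on_rotation_vec2: "continuous_on S (rotation_vec2 t)"
  using orthogonal_transformation_rotation_vec2[of t]
  by (simp add: linear_continuous_on linear_linear orthogonal_transformation_linear)

lemma rotation_vec2_measurable [measurable]: "rotation_vec2 t \<in> borel_measurable borel"
  by (rule borel_measurable_continuous_onI[OF continuous_on_rotation_vec2])

lemma lborel_distr_rotation_vec2: "distr lborel borel (rotation_vec2 t) = lborel"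
proof (rule lborel_eqI[symmetric])
  fix l u :: "real^2"
  assume "\<And>b. b \<in> Basis \<Longrightarrow> l \<bullet> b \<le> u \<bullet> b"
  define X where "X = rotation_vec2 t -` box l u"
  have X: "X = rotation_vec2 (- t) ` box l u"
    unfolding X_def using rotation_vec2_minus_inverse[of t] rotation_vec2_minus_inverse[of "- t"]
    by (auto simp: image_iff) (metis minus_minus)
  have "open X"
    unfolding X_def by (intro open_vimage continuous_on_rotation_vec2 open_box open_UNIV)
  then have "X \<in> sets lborel"
    by simp
  have "bounded X"
    unfolding X by (intro bounded_linear_image bounded_box)
      (metis linear_linear orthogonal_transformation_linear orthogonal_transformation_rotation_vec2)
  then have "emeasure lborel X < \<infinity>"
    by (rule emeasure_bounded_finite)
  have "measure lebesgue X = measure lebesgue (box l u)"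
    unfolding X by (rule measure_orthogonal_image[OF orthogonal_transformation_rotation_vec2]) simp
  then have "measure lborel X = measure lborel (box l u)"
    using \<open>X \<in> sets lborel\<close> by (simp add: measure_completion)
  then have "emeasure lborel X = emeasure lborel (box l u)"
    using \<open>emeasure lborel X < \<infinity>\<close> emeasure_lborel_box_finite[of l u]
    by (simp add: emeasure_eq_ennreal_measure less_top)
  then show "emeasure (distr lborel borel (rotation_vec2 t)) (box l u) = (\<Prod>b\<in>Basis. (u - l) \<bullet> b)"
    using \<open>\<And>b. b \<in> Basis \<Longrightarrow> l \<bullet> b \<le> u \<bullet> b\<close> by (simp add: emeasure_distr X_def)
qed simp

lemma lborel_distr_cis_mult: "distr lborel borel (\<lambda>z. cis t * z) = (lborel :: complex measure)"
proof -
  have m: "(\<lambda>z. cis t * z) \<in> borel_measurable borel"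
    by measurable
  have "distr lborel borel (\<lambda>z. cis t * z)
      = distr (distr lborel borel complex_of_vec2) borel (\<lambda>z. cis t * z)"
    by (simp add: lborel_distr_complex_of_vec2)
  also have "\<dots> = distr lborel borel ((\<lambda>z. cis t * z) \<circ> complex_of_vec2)"
    by (subst distr_distr) (use m in auto)
  also have "(\<lambda>z. cis t * z) \<circ> complex_of_vec2 = complex_of_vec2 \<circ> rotation_vec2 t"
    by (simp add: fun_eq_iff complex_of_vec2_rotation)
  also have "distr lborel borel \<dots> = distr (distr lborel borel (rotation_vec2 t)) borel complex_of_vec2"
    by (subst distr_distr) auto
  also have "\<dots> = lborel"
    by (simp add: lborel_distr_rotation_vec2 lborel_distr_complex_of_vec2)
  finally show ?thesis .
qed

lemma nn_integral_lborel_cis_mult: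
  assumes [measurable]: "f \<in> borel_measurable borel"
  shows "(\<integral>\<^sup>+ z. f (cis t * z) \<partial>lborel) = (\<integral>\<^sup>+ z. f z \<partial>(lborel :: complex measure))"
  by (subst (2) lborel_distr_cis_mult[symmetric, of t]) (simp add: nn_integral_distr)

lemma nn_integral_lborel_add:
  fixes w :: "'a::euclidean_space"
  assumes [measurable]: "f \<in> borel_measurable borel"
  shows "(\<integral>\<^sup>+ z. f (w + z) \<partial>lborel) = (\<integral>\<^sup>+ z. f z \<partial>lborel)"
  by (subst (2) lborel_distr_plus[symmetric, of w]) (simp add: nn_integral_distr)

lemma nn_integral_exp_minus_square: "(\<integral>\<^sup>+ x. ennreal (exp (- x\<^sup>2)) \<partial>lborel) = ennreal (sqrt pi)"
proof -
  have "(\<integral>\<^sup>+ x. ennreal (normal_density 0 (sqrt (1/2)) x) \<partial>lborel) = 1"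
    by (subst nn_integral_eq_integral) (auto simp: normal_density_nonneg)
  moreover have "normal_density 0 (sqrt (1/2)) x = exp (- x\<^sup>2) / sqrt pi" for x
    by (simp add: normal_density_def)
  ultimately have "(\<integral>\<^sup>+ x. ennreal (exp (- x\<^sup>2) / sqrt pi) \<partial>lborel) = 1"
    by simp
  moreover have "(\<integral>\<^sup>+ x. ennreal (exp (- x\<^sup>2)) \<partial>lborel)
      = ennreal (sqrt pi) * (\<integral>\<^sup>+ x. ennreal (exp (- x\<^sup>2) / sqrt pi) \<partial>lborel)"
    by (subst nn_integral_cmult[symmetric]) (auto simp: ennreal_mult[symmetric] intro!: nn_integral_cong)
  ultimately show ?thesis
    by simp
qed

lemma nn_integral_exp_minus_norm_square:
  "(\<integral>\<^sup>+ z. ennreal (exp (- (cmod z)\<^sup>2)) \<partial>(lborel :: complex measure)) = ennreal pi"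
proof -
  have "ennreal (exp (- (cmod z)\<^sup>2)) = (\<Prod>b\<in>Basis. ennreal (exp (- (z \<bullet> b)\<^sup>2)))" for z
    by (simp add: Basis_complex_def cmod_power2 exp_add[symmetric] ennreal_mult[symmetric] inner_complex_def)
  then have "(\<integral>\<^sup>+ z. ennreal (exp (- (cmod z)\<^sup>2)) \<partial>(lborel :: complex measure))
      = (\<Prod>b\<in>(Basis :: complex set). \<integral>\<^sup>+ x. ennreal (exp (- x\<^sup>2)) \<partial>lborel)"
    by (simp only:) (rule nn_integral_lborel_prod; simp)
  also have "\<dots> = ennreal (sqrt pi) * ennreal (sqrt pi)"
    by (simp add: Basis_complex_def nn_integral_exp_minus_square)
  also have "\<dots> = ennreal pi"
    by (simp flip: ennreal_mult)
  finally show ?thesis .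
qed

section \<open>Entire functions\<close>

lemma holomorphic_circle_mean:
  fixes g :: "complex \<Rightarrow> complex"
  assumes g: "g holomorphic_on UNIV"
  shows "((\<lambda>t. g (cis t * z)) has_integral (2 * pi * g 0)) {0..2*pi}"
proof (cases "z = 0")
  case True
  then show ?thesis
    using has_integral_const_real[of "g 0" 0 "2*pi"] by (simp add: scaleR_conv_of_real algebra_simps)
next
  case False
  define r where "r = cmod z"
  have r: "r > 0"
    using False by (simp add: r_def)
  define h where "h u = g (z / r * u)" for u
  have "h holomorphic_on cball 0 r"
    unfolding h_def by (intro holomorphic_on_compose_gen[OF _ g, unfolded o_def] holomorphic_intros) auto
  then have "((\<lambda>u. h u / (u - 0)) has_contour_integral 2 * complex_of_real pi * \<i> * h 0) (circlepath 0 r)"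
    by (rule Cauchy_integral_circlepath_simple) (use r in simp)
  then have "((\<lambda>t. h (r * cis t) / (r * cis t) * r * \<i> * cis t)
      has_integral 2 * complex_of_real pi * \<i> * h 0) {0..2*pi}"
    unfolding circlepath_def by (subst (asm) has_contour_integral_part_circlepath_iff) auto
  moreover have "h (r * cis t) / (r * cis t) * r * \<i> * cis t = \<i> * g (cis t * z)" for t
    using r by (simp add: h_def field_simps)
  ultimately have "((\<lambda>t. \<i> * g (cis t * z)) has_integral \<i> * (2 * pi * g 0)) {0..2*pi}"
    by (simp add: h_def algebra_simps)
  then have "((\<lambda>t. (- \<i>) * (\<i> * g (cis t * z))) has_integral (- \<i>) * (\<i> * (2 * pi * g 0))) {0..2*pi}"
    by (rule has_integral_mult_right)
  then show ?thesis
    by simp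
qed

text \<open>Integrate \<open>|g - g 0|\<^sup>2 \<ge> 0\<close> over the circle and use the mean value property.\<close>

lemma holomorphic_circle_mean_norm_square:
  fixes g :: "complex \<Rightarrow> complex"
  assumes g: "g holomorphic_on UNIV"
  shows "(\<lambda>t. (cmod (g (cis t * z)))\<^sup>2) integrable_on {0..2*pi}"
    and "2 * pi * (cmod (g 0))\<^sup>2 \<le> integral {0..2*pi} (\<lambda>t. (cmod (g (cis t * z)))\<^sup>2)"
proof -
  define \<phi> where "\<phi> t = g (cis t * z)" for t
  define m where "m = g 0"
  have "continuous_on {0..2*pi} \<phi>"
    unfolding \<phi>_def
    by (intro continuous_on_compose2[OF holomorphic_on_imp_continuous_on[OF g]] continuous_intros) auto
  then have int: "(\<lambda>t. (cmod (\<phi> t))\<^sup>2) integrable_on {0..2*pi}"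
    by (intro integrable_continuous_interval continuous_intros)
  then show "(\<lambda>t. (cmod (g (cis t * z)))\<^sup>2) integrable_on {0..2*pi}"
    by (simp add: \<phi>_def)
  have circle: "(\<phi> has_integral (2 * pi * m)) {0..2*pi}"
    unfolding \<phi>_def m_def by (rule holomorphic_circle_mean[OF g])
  have "bounded_linear (\<lambda>x. Re (cnj m * x))"
    by (intro bounded_linear_compose[OF bounded_linear_Re] bounded_linear_mult_right)
  from has_integral_linear[OF circle this]
  have "((\<lambda>t. Re (cnj m * \<phi> t)) has_integral Re (cnj m * (2 * pi * m))) {0..2*pi}"
    by (simp add: o_def)
  also have "Re (cnj m * (2 * pi * m)) = 2 * pi * (cmod m)\<^sup>2"
    unfolding cmod_power2 by (simp add: power2_eq_square algebra_simps)
  finally have mean: "((\<lambda>t. Re (cnj m * \<phi> t)) has_integral 2 * pi * (cmod m)\<^sup>2) {0..2*pi}" .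
  have const: "((\<lambda>t. (cmod m)\<^sup>2) has_integral 2 * pi * (cmod m)\<^sup>2) {0..2*pi}"
    using has_integral_const_real[of "(cmod m)\<^sup>2" 0 "2*pi"] by simp
  have expand: "(cmod (\<phi> t - m))\<^sup>2 = (cmod (\<phi> t))\<^sup>2 - 2 * Re (cnj m * \<phi> t) + (cmod m)\<^sup>2" for t
    unfolding cmod_power2 by (simp add: power2_eq_square algebra_simps)
  have "((\<lambda>t. (cmod (\<phi> t))\<^sup>2 - 2 * Re (cnj m * \<phi> t) + (cmod m)\<^sup>2) has_integral
      integral {0..2*pi} (\<lambda>t. (cmod (\<phi> t))\<^sup>2) - 2 * (2 * pi * (cmod m)\<^sup>2) + 2 * pi * (cmod m)\<^sup>2) {0..2*pi}"
    by (intro has_integral_add has_integral_diff has_integral_mult_right const integrable_integral int mean)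
  then have "((\<lambda>t. (cmod (\<phi> t - m))\<^sup>2) has_integral
      integral {0..2*pi} (\<lambda>t. (cmod (\<phi> t))\<^sup>2) - 2 * pi * (cmod m)\<^sup>2) {0..2*pi}"
    unfolding expand by (simp add: algebra_simps)
  then have "0 \<le> integral {0..2*pi} (\<lambda>t. (cmod (\<phi> t))\<^sup>2) - 2 * pi * (cmod m)\<^sup>2"
    by (rule has_integral_nonneg) simp
  then show "2 * pi * (cmod (g 0))\<^sup>2 \<le> integral {0..2*pi} (\<lambda>t. (cmod (g (cis t * z)))\<^sup>2)"
    by (simp add: \<phi>_def m_def)
qed

lemma entire_Re_bounded_above_imp_constant:
  fixes H :: "complex \<Rightarrow> complex"
  assumes H: "H holomorphic_on UNIV" and bound: "\<And>z. Re (H z) \<le> M"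
  shows "H z = H 0"
proof -
  define c where "c = complex_of_real (M + 1)"
  have norm_ge: "1 \<le> cmod (H z - c)" for z
  proof -
    have "Re (H z - c) \<le> -1"
      using bound[of z] by (simp add: c_def)
    then show ?thesis
      using abs_Re_le_cmod[of "H z - c"] by linarith
  qed
  then have nonzero: "H z - c \<noteq> 0" for z
    by (metis norm_zero not_one_le_zero)
  have "(\<lambda>z. 1 / (H z - c)) holomorphic_on UNIV"
    using nonzero by (intro holomorphic_intros H) auto
  moreover have "bounded (range (\<lambda>z. 1 / (H z - c)))"
    unfolding bounded_iff using norm_ge by (intro exI[of _ 1]) (auto simp: norm_divide divide_le_eq_1)
  ultimately have "(\<lambda>z. 1 / (H z - c)) constant_on UNIV"
    by (rule Liouville_theorem)
  then obtain k where "\<And>z. 1 / (H z - c) = k"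
    unfolding constant_on_def by blast
  then have "1 / (H z - c) = 1 / (H 0 - c)"
    by simp
  then show ?thesis
    using nonzero[of z] nonzero[of 0] by simp
qed

lemma Re_divided_difference_le:
  fixes G :: "complex \<Rightarrow> complex"
  assumes bound: "\<And>w. Re (G w * cnj w) \<le> \<omega>" and z: "1 \<le> cmod z"
  shows "Re ((G z - G 0) / z) \<le> (\<bar>\<omega>\<bar> + cmod (G 0)) / cmod z"
proof -
  define q where "q = (G z - G 0) / z"
  have "z * cnj z = complex_of_real ((cmod z)\<^sup>2)"
    by (rule complex_norm_square[symmetric])
  moreover have "G z = q * z + G 0"
    using z by (auto simp: q_def)
  ultimately have "G z * cnj z = q * complex_of_real ((cmod z)\<^sup>2) + G 0 * cnj z"
    by (simp add: algebra_simps)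
  then have "Re q * (cmod z)\<^sup>2 \<le> \<omega> - Re (G 0 * cnj z)"
    using bound[of z] by simp
  also have "\<dots> \<le> \<bar>\<omega>\<bar> * cmod z + cmod (G 0) * cmod z"
    using abs_Re_le_cmod[of "G 0 * cnj z"] mult_left_mono[OF z, of "\<bar>\<omega>\<bar>"]
    by (simp add: norm_mult)
  finally have "cmod z * (Re q * cmod z) \<le> cmod z * (\<bar>\<omega>\<bar> + cmod (G 0))"
    by (simp add: power2_eq_square algebra_simps)
  then have "Re q * cmod z \<le> \<bar>\<omega>\<bar> + cmod (G 0)"
    by (rule mult_left_le_imp_le) (use z in linarith)
  then show ?thesis
    unfolding q_def[symmetric] using z by (subst pos_le_divide_eq) auto
qed

lemma entire_affine_if_Re_mult_cnj_bounded:
  fixes G :: "complex \<Rightarrow> complex"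
  assumes G: "G holomorphic_on UNIV" and bound: "\<And>w. Re (G w * cnj w) \<le> \<omega>"
  shows "\<exists>a b. (\<forall>z. G z = a * z + b) \<and> Re a \<le> 0"
proof -
  define C where "C = \<bar>\<omega>\<bar> + cmod (G 0)"
  define H where "H z = (if z = 0 then deriv G 0 else (G z - G 0) / (z - 0))" for z
  have H: "H holomorphic_on UNIV"
    unfolding H_def[abs_def] by (rule pole_lemma_open[OF G]) simp
  have H_far: "Re (H z) \<le> C / cmod z" if "1 \<le> cmod z" for z
    using Re_divided_difference_le[OF bound that] that by (auto simp: H_def C_def)
  have "compact (H ` cball 0 1)"
    by (intro compact_continuous_image holomorphic_on_imp_continuous_on holomorphic_on_subset[OF H]) auto
  then obtain B where B: "\<And>z. z \<in> cball 0 1 \<Longrightarrow> cmod (H z) \<le> B"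
    by (metis compact_imp_bounded bounded_iff image_eqI)
  have "Re (H z) \<le> max B C" for z
  proof (cases "cmod z \<le> 1")
    case True
    then show ?thesis
      using B[of z] complex_Re_le_cmod[of "H z"] by simp
  next
    case False
    then have "C / cmod z \<le> C / 1"
      by (intro divide_left_mono) (auto simp: C_def)
    then show ?thesis
      using H_far[of z] False by simp
  qed
  then have const: "H z = H 0" for z
    by (rule entire_Re_bounded_above_imp_constant[OF H])
  have "Re (H 0) \<le> C / r" if "1 \<le> r" for r
    using H_far[of "complex_of_real r"] const[of "complex_of_real r"] that by simp
  then have "\<forall>\<^sub>F r in at_top. Re (H 0) \<le> C / r"
    by (auto simp: eventually_at_top_linorder)
  moreover have "((\<lambda>r. C / r) \<longlongrightarrow> 0) at_top"
    by (rule real_tendsto_divide_at_top[OF tendsto_const filterlim_ident])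
  ultimately have "Re (H 0) \<le> 0"
    by (intro tendsto_lowerbound) auto
  moreover have "G z = H 0 * z + G 0" for z
    using const[of z] by (cases "z = 0") (auto simp: H_def divide_eq_eq algebra_simps)
  ultimately show ?thesis
    by blast
qed

section \<open>The Fock integral\<close>

lemma holomorphic_on_UNIV_borel_measurable:
  "f holomorphic_on UNIV \<Longrightarrow> f \<in> borel_measurable borel"
  by (intro borel_measurable_continuous_onI holomorphic_on_imp_continuous_on)

lemma cis_measurable [measurable]: "cis \<in> borel_measurable borel"
  by (intro borel_measurable_continuous_onI continuous_intros)

lemma fock_integral_cis_mult:
  assumes [measurable]: "g \<in> borel_measurable borel"
  shows "fock_integral (\<lambda>z. g (cis t * z)) = fock_integral g"
  unfolding fock_integral_def
  using nn_integral_lborel_cis_mult[of "\<lambda>u. ennreal ((cmod (g u))\<^sup>2 * exp (- (cmod u)\<^sup>2))" t]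
  by (simp add: norm_mult)

lemma nn_integral_circle_norm_square_ge:
  fixes g :: "complex \<Rightarrow> complex"
  assumes g: "g holomorphic_on UNIV" and "0 \<le> c"
  shows "ennreal (2 * pi * (cmod (g 0))\<^sup>2 * c)
    \<le> (\<integral>\<^sup>+ t. ennreal (indicator {0..2*pi} t * ((cmod (g (cis t * z)))\<^sup>2 * c)) \<partial>lborel)"
proof -
  define I where "I = integral {0..2*pi} (\<lambda>t. (cmod (g (cis t * z)))\<^sup>2)"
  have "((\<lambda>t. (cmod (g (cis t * z)))\<^sup>2 * c) has_integral I * c) {0..2*pi}"
    unfolding I_def
    by (intro has_integral_mult_left integrable_integral holomorphic_circle_mean_norm_square(1)[OF g])
  then have "(\<integral>\<^sup>+ t. ennreal (indicator {0..2*pi} t * ((cmod (g (cis t * z)))\<^sup>2 * c)) \<partial>lborel)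
      = ennreal (I * c)"
    by (rule nn_integral_has_integral_lebesgue[rotated]) (simp add: \<open>0 \<le> c\<close>)
  moreover have "2 * pi * (cmod (g 0))\<^sup>2 \<le> I"
    unfolding I_def by (rule holomorphic_circle_mean_norm_square(2)[OF g])
  ultimately show ?thesis
    using \<open>0 \<le> c\<close> by (auto intro!: ennreal_leI mult_right_mono)
qed

text \<open>Integrate the sub-mean value inequality on circles against the Gaussian weight and
  use Fubini and rotation invariance of the weighted measure.\<close>

lemma fock_integral_ge_norm_0:
  fixes g :: "complex \<Rightarrow> complex"
  assumes g: "g holomorphic_on UNIV"
  shows "ennreal (pi * (cmod (g 0))\<^sup>2) \<le> fock_integral g"
proof -
  have [measurable]: "g \<in> borel_measurable borel"
    using g by (rule holomorphic_on_UNIV_borel_measurable)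
  define W where "W z = exp (- (cmod z)\<^sup>2)" for z :: complex
  have [measurable]: "W \<in> borel_measurable borel"
    unfolding W_def by measurable
  define F where "F t z = ennreal (indicator {0..2*pi} t * ((cmod (g (cis t * z)))\<^sup>2 * W z))"
    for t :: real and z
  have F_measurable: "(\<lambda>(t, z). F t z) \<in> borel_measurable (lborel \<Otimes>\<^sub>M lborel)"
    unfolding F_def by measurable
  have "ennreal (2 * pi) * ennreal (pi * (cmod (g 0))\<^sup>2) = ennreal (2 * pi * (cmod (g 0))\<^sup>2) * ennreal pi"
    by (simp flip: ennreal_mult add: mult_ac)
  also have "\<dots> = (\<integral>\<^sup>+ z. ennreal (2 * pi * (cmod (g 0))\<^sup>2 * W z) \<partial>lborel)"
    unfolding W_def nn_integral_exp_minus_norm_square[symmetric]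
    by (subst nn_integral_cmult[symmetric]) (auto simp: ennreal_mult)
  also have "\<dots> \<le> (\<integral>\<^sup>+ z. \<integral>\<^sup>+ t. F t z \<partial>lborel \<partial>lborel)"
    unfolding F_def by (intro nn_integral_mono nn_integral_circle_norm_square_ge[OF g]) (simp add: W_def)
  also have "\<dots> = (\<integral>\<^sup>+ t. \<integral>\<^sup>+ z. F t z \<partial>lborel \<partial>lborel)"
    by (rule lborel_pair.Fubini'[OF F_measurable])
  also have "\<dots> = (\<integral>\<^sup>+ t. fock_integral g * indicator {0..2*pi} t \<partial>lborel)"
  proof (intro nn_integral_cong)
    fix t :: real
    have "(\<integral>\<^sup>+ z. F t z \<partial>lborel) = fock_integral (\<lambda>z. g (cis t * z)) * indicator {0..2*pi} t"
      by (cases "t \<in> {0..2*pi}") (simp_all add: F_def W_def fock_integral_def norm_mult)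
    then show "(\<integral>\<^sup>+ z. F t z \<partial>lborel) = fock_integral g * indicator {0..2*pi} t"
      by (simp add: fock_integral_cis_mult)
  qed
  also have "\<dots> = ennreal (2 * pi) * fock_integral g"
    by (subst nn_integral_cmult_indicator) (auto simp: mult.commute)
  finally show ?thesis
    by (subst (asm) ennreal_mult_le_mult_iff) auto
qed

lemma norm_exp_cnj_mult_square:
  "(cmod (exp (cnj w * z)))\<^sup>2 * exp (- (cmod z)\<^sup>2) = exp ((cmod w)\<^sup>2) * exp (- (cmod (z - w))\<^sup>2)"
proof -
  have "(cmod (z - w))\<^sup>2 = (cmod z)\<^sup>2 - 2 * Re (cnj w * z) + (cmod w)\<^sup>2"
    unfolding cmod_power2 by (simp add: power2_eq_square algebra_simps)
  then show ?thesis
    by (simp add: norm_exp_eq_Re power2_eq_square flip: exp_add)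
qed

lemma fock_integral_weyl_translate:
  assumes [measurable]: "h \<in> borel_measurable borel"
  shows "fock_integral (\<lambda>z. h (w + z) * exp (- (cnj w * z)))
    = ennreal (exp ((cmod w)\<^sup>2)) * fock_integral h"
proof -
  have "(cmod (h (w + z) * exp (- (cnj w * z))))\<^sup>2 * exp (- (cmod z)\<^sup>2)
      = exp ((cmod w)\<^sup>2) * ((cmod (h (w + z)))\<^sup>2 * exp (- (cmod (w + z))\<^sup>2))" for z
    using norm_exp_cnj_mult_square[of "- w" z]
    by (simp add: norm_mult power_mult_distrib mult_ac add.commute)
  then have "fock_integral (\<lambda>z. h (w + z) * exp (- (cnj w * z)))
      = (\<integral>\<^sup>+ z. ennreal (exp ((cmod w)\<^sup>2)) * ennreal ((cmod (h (w + z)))\<^sup>2 * exp (- (cmod (w + z))\<^sup>2)) \<partial>lborel)"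
    unfolding fock_integral_def by (intro nn_integral_cong) (simp add: ennreal_mult)
  also have "\<dots> = ennreal (exp ((cmod w)\<^sup>2)) * fock_integral h"
    unfolding fock_integral_def
    using nn_integral_lborel_add[of "\<lambda>u. ennreal ((cmod (h u))\<^sup>2 * exp (- (cmod u)\<^sup>2))" w]
    by (subst nn_integral_cmult) auto
  finally show ?thesis .
qed

lemma fock_integral_ge_norm:
  assumes h: "h holomorphic_on UNIV"
  shows "ennreal (pi * (cmod (h w))\<^sup>2) \<le> ennreal (exp ((cmod w)\<^sup>2)) * fock_integral h"
proof -
  have "(\<lambda>z. h (w + z) * exp (- (cnj w * z))) holomorphic_on UNIV"
    by (intro holomorphic_intros holomorphic_on_compose_gen[OF _ h, unfolded o_def]) auto
  from fock_integral_ge_norm_0[OF this] show ?thesis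
    by (simp add: fock_integral_weyl_translate holomorphic_on_UNIV_borel_measurable[OF h])
qed

lemma fock_integral_exp_cnj_mult:
  "fock_integral (\<lambda>z. exp (cnj w * z)) = ennreal (pi * exp ((cmod w)\<^sup>2))"
proof -
  have "fock_integral (\<lambda>z. exp (cnj w * z))
      = (\<integral>\<^sup>+ z. ennreal (exp ((cmod w)\<^sup>2)) * ennreal (exp (- (cmod (- w + z))\<^sup>2)) \<partial>lborel)"
    unfolding fock_integral_def norm_exp_cnj_mult_square
    by (intro nn_integral_cong) (simp add: ennreal_mult)
  also have "\<dots> = ennreal (exp ((cmod w)\<^sup>2)) * ennreal pi"
    using nn_integral_lborel_add[of "\<lambda>u. ennreal (exp (- (cmod u)\<^sup>2))" "- w"]
    by (subst nn_integral_cmult) (auto simp: nn_integral_exp_minus_norm_square)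
  finally show ?thesis
    by (simp add: ennreal_mult mult.commute)
qed

lemma fock_integral_cmult:
  assumes [measurable]: "f \<in> borel_measurable borel"
  shows "fock_integral (\<lambda>z. c * f z) = ennreal ((cmod c)\<^sup>2) * fock_integral f"
  unfolding fock_integral_def
  by (subst nn_integral_cmult[symmetric])
    (auto intro!: nn_integral_cong simp: ennreal_mult[symmetric] norm_mult power_mult_distrib mult.assoc)

lemma norm_add_square_le:
  fixes x y :: "'a::real_normed_vector"
  assumes "l > 0"
  shows "(norm (x + y))\<^sup>2 \<le> (1 + l) * (norm x)\<^sup>2 + (1 + 1 / l) * (norm y)\<^sup>2"
proof -
  have "0 \<le> (l * norm x - norm y)\<^sup>2"
    by simp
  then have "2 * (norm x * norm y) \<le> l * (norm x)\<^sup>2 + (norm y)\<^sup>2 / l"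
    using assms by (simp add: power2_eq_square field_simps)
  then have "(norm x + norm y)\<^sup>2 \<le> (1 + l) * (norm x)\<^sup>2 + (1 + 1 / l) * (norm y)\<^sup>2"
    by (simp add: power2_eq_square algebra_simps)
  moreover have "(norm (x + y))\<^sup>2 \<le> (norm x + norm y)\<^sup>2"
    by (simp add: norm_triangle_ineq power_mono)
  ultimately show ?thesis
    by linarith
qed

lemma fock_integral_add_le:
  assumes [measurable]: "f \<in> borel_measurable borel" "g \<in> borel_measurable borel" and l: "l > 0"
  shows "fock_integral (\<lambda>z. f z + g z)
    \<le> ennreal (1 + l) * fock_integral f + ennreal (1 + 1 / l) * fock_integral g"
proof -
  have "(cmod (f z + g z))\<^sup>2 * exp (- (cmod z)\<^sup>2)
      \<le> (1 + l) * ((cmod (f z))\<^sup>2 * exp (- (cmod z)\<^sup>2)) + (1 + 1 / l) * ((cmod (g z))\<^sup>2 * exp (- (cmod z)\<^sup>2))"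
    for z
    using mult_right_mono[OF norm_add_square_le[OF l, of "f z" "g z"], of "exp (- (cmod z)\<^sup>2)"]
    by (simp add: algebra_simps)
  then have "fock_integral (\<lambda>z. f z + g z) \<le> (\<integral>\<^sup>+ z.
      ennreal (1 + l) * ennreal ((cmod (f z))\<^sup>2 * exp (- (cmod z)\<^sup>2))
      + ennreal (1 + 1 / l) * ennreal ((cmod (g z))\<^sup>2 * exp (- (cmod z)\<^sup>2)) \<partial>lborel)"
    unfolding fock_integral_def using l
    by (intro nn_integral_mono) (simp add: ennreal_mult[symmetric] ennreal_plus[symmetric] del: ennreal_plus)
  also have "\<dots> = ennreal (1 + l) * fock_integral f + ennreal (1 + 1 / l) * fock_integral g"
    unfolding fock_integral_def by (subst nn_integral_add) (auto simp: nn_integral_cmult)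
  finally show ?thesis .
qed

section \<open>The Fock space\<close>

lemma Fock2_holomorphic: "f \<in> Fock2 \<Longrightarrow> f holomorphic_on UNIV"
  by (simp add: Fock2_def)

lemma Fock2_borel_measurable: "f \<in> Fock2 \<Longrightarrow> f \<in> borel_measurable borel"
  by (simp add: Fock2_def holomorphic_on_UNIV_borel_measurable)

lemma fock_norm_nonneg: "0 \<le> fock_norm f"
  by (simp add: fock_norm_def)

lemma fock_integral_eq_fock_norm:
  assumes "f \<in> Fock2"
  shows "fock_integral f = ennreal (pi * (fock_norm f)\<^sup>2)"
proof -
  have "pi * (fock_norm f)\<^sup>2 = enn2real (fock_integral f)"
    by (simp add: fock_norm_def)
  then show ?thesis
    using assms by (simp add: Fock2_def ennreal_enn2real_if less_top)
qed

lemma fock_norm_le: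
  assumes "fock_integral f \<le> ennreal (pi * c\<^sup>2)" and "0 \<le> c"
  shows "fock_norm f \<le> c"
proof -
  have "enn2real (fock_integral f) \<le> pi * c\<^sup>2"
    using enn2real_mono[OF assms(1)] by simp
  then have "enn2real (fock_integral f) / pi \<le> c\<^sup>2"
    by (simp add: divide_le_eq mult.commute)
  then show ?thesis
    unfolding fock_norm_def using real_sqrt_le_mono assms(2) by fastforce
qed

lemma Fock2_0: "(\<lambda>z. 0) \<in> Fock2"
  by (simp add: Fock2_def fock_integral_def)

lemma Fock2_cmult: "f \<in> Fock2 \<Longrightarrow> (\<lambda>z. c * f z) \<in> Fock2"
  by (auto simp: Fock2_def fock_integral_cmult holomorphic_on_UNIV_borel_measurable
      ennreal_mult_less_top intro: holomorphic_intros)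

lemma Fock2_add: "f \<in> Fock2 \<Longrightarrow> g \<in> Fock2 \<Longrightarrow> (\<lambda>z. f z + g z) \<in> Fock2"
  using fock_integral_add_le[of f g 1]
  by (auto simp: Fock2_def holomorphic_on_UNIV_borel_measurable ennreal_mult_less_top
      intro: holomorphic_intros le_less_trans)

lemma Fock2_uminus: "f \<in> Fock2 \<Longrightarrow> (\<lambda>z. - f z) \<in> Fock2"
  using Fock2_cmult[of f "-1"] by simp

lemma Fock2_diff: "f \<in> Fock2 \<Longrightarrow> g \<in> Fock2 \<Longrightarrow> (\<lambda>z. f z - g z) \<in> Fock2"
  using Fock2_add[OF _ Fock2_uminus, of f g] by simp

lemma exp_cnj_mult_Fock2: "(\<lambda>z. exp (cnj w * z)) \<in> Fock2"
  by (simp add: Fock2_def fock_integral_exp_cnj_mult holomorphic_intros)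

lemma fock_norm_exp_cnj_mult: "fock_norm (\<lambda>z. exp (cnj w * z)) = exp ((cmod w)\<^sup>2 / 2)"
proof -
  have "sqrt (exp ((cmod w)\<^sup>2)) = exp ((cmod w)\<^sup>2 / 2)"
    by (rule real_sqrt_unique) (simp_all add: power2_eq_square flip: exp_add)
  then show ?thesis
    by (simp add: fock_norm_def fock_integral_exp_cnj_mult)
qed

lemma exp_cnj_mult_self: "exp (cnj w * w) = complex_of_real (exp ((cmod w)\<^sup>2))"
proof -
  have "cnj w * w = complex_of_real ((cmod w)\<^sup>2)"
    using complex_norm_square[of w] by (simp only: mult.commute)
  then show ?thesis
    by (simp only: exp_of_real)
qed

lemma deriv_exp_cnj_mult: "deriv (\<lambda>z. exp (cnj w * z)) z = cnj w * exp (cnj w * z)"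
  by (intro DERIV_imp_deriv) (auto intro!: derivative_eq_intros)

lemma norm_le_fock_norm:
  assumes f: "f \<in> Fock2"
  shows "cmod (f w) \<le> exp ((cmod w)\<^sup>2 / 2) * fock_norm f"
proof -
  have "ennreal (pi * (cmod (f w))\<^sup>2) \<le> ennreal (exp ((cmod w)\<^sup>2) * (pi * (fock_norm f)\<^sup>2))"
    using fock_integral_ge_norm[OF Fock2_holomorphic[OF f], of w]
    by (simp add: fock_integral_eq_fock_norm[OF f] ennreal_mult)
  then have "(cmod (f w))\<^sup>2 \<le> exp ((cmod w)\<^sup>2) * (fock_norm f)\<^sup>2"
    by (simp add: ennreal_le_iff mult.left_commute)
  also have "\<dots> = (exp ((cmod w)\<^sup>2 / 2) * fock_norm f)\<^sup>2"
    by (simp add: power_mult_distrib power2_eq_square flip: exp_add)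
  finally show ?thesis
    by (rule power2_le_imp_le) (simp add: fock_norm_nonneg)
qed

lemma norm_deriv_le_fock_norm:
  assumes f: "f \<in> Fock2"
  shows "cmod (deriv f z) \<le> exp ((cmod z + 1)\<^sup>2 / 2) * fock_norm f"
proof -
  have "cmod ((deriv ^^ 1) f z) \<le> fact 1 * (exp ((cmod z + 1)\<^sup>2 / 2) * fock_norm f) / 1 ^ 1"
  proof (rule Cauchy_inequality)
    show "f holomorphic_on ball z 1" "continuous_on (cball z 1) f"
      using Fock2_holomorphic[OF f]
      by (auto intro: holomorphic_on_subset continuous_on_subset holomorphic_on_imp_continuous_on)
    fix x
    assume "cmod (z - x) = 1"
    then have "cmod x \<le> cmod z + 1"
      using norm_triangle_ineq2[of x z] by (simp add: norm_minus_commute)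
    then have "exp ((cmod x)\<^sup>2 / 2) \<le> exp ((cmod z + 1)\<^sup>2 / 2)"
      by (simp add: power_mono)
    then show "cmod (f x) \<le> exp ((cmod z + 1)\<^sup>2 / 2) * fock_norm f"
      using norm_le_fock_norm[OF f, of x] mult_right_mono[OF _ fock_norm_nonneg] by (meson order_trans)
  qed simp
  then show ?thesis
    by simp
qed

lemma fock_norm_eq_0_iff:
  assumes "f \<in> Fock2"
  shows "fock_norm f = 0 \<longleftrightarrow> f = (\<lambda>z. 0)"
proof
  assume "fock_norm f = 0"
  then show "f = (\<lambda>z. 0)"
    using norm_le_fock_norm[OF assms] by (simp add: fun_eq_iff)
qed (simp add: fock_norm_def fock_integral_def)

lemma fock_norm_cmult:
  assumes f: "f \<in> Fock2"
  shows "fock_norm (\<lambda>z. c * f z) = cmod c * fock_norm f"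
proof -
  have "ennreal (pi * (fock_norm (\<lambda>z. c * f z))\<^sup>2) = ennreal (pi * (cmod c * fock_norm f)\<^sup>2)"
    using fock_integral_cmult[OF Fock2_borel_measurable[OF f], of c]
    by (simp add: fock_integral_eq_fock_norm f Fock2_cmult power_mult_distrib mult_ac flip: ennreal_mult)
  then have "(fock_norm (\<lambda>z. c * f z))\<^sup>2 = (cmod c * fock_norm f)\<^sup>2"
    by (simp add: ennreal_inj)
  then show ?thesis
    by (simp add: fock_norm_nonneg power2_eq_iff_nonneg)
qed

text \<open>Choosing \<open>l = \<parallel>g\<parallel> / \<parallel>f\<parallel>\<close> in \<open>fock_integral_add_le\<close> makes the right-hand side
  exactly \<open>pi * (\<parallel>f\<parallel> + \<parallel>g\<parallel>)\<^sup>2\<close>.\<close>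

lemma fock_norm_triangle:
  assumes f: "f \<in> Fock2" and g: "g \<in> Fock2"
  shows "fock_norm (\<lambda>z. f z + g z) \<le> fock_norm f + fock_norm g"
proof (cases "fock_norm f = 0 \<or> fock_norm g = 0")
  case True
  then show ?thesis
    using f g by (auto simp: fock_norm_eq_0_iff fock_norm_nonneg)
next
  case False
  define a where "a = fock_norm f"
  define b where "b = fock_norm g"
  have a: "a > 0" and b: "b > 0"
    using False fock_norm_nonneg[of f] fock_norm_nonneg[of g] by (auto simp: a_def b_def)
  have "fock_integral (\<lambda>z. f z + g z)
      \<le> ennreal (1 + b / a) * ennreal (pi * a\<^sup>2) + ennreal (1 + 1 / (b / a)) * ennreal (pi * b\<^sup>2)"
    using fock_integral_add_le[OF Fock2_borel_measurable[OF f] Fock2_borel_measurable[OF g], of "b / a"] a b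
    by (simp add: fock_integral_eq_fock_norm f g a_def b_def)
  also have "\<dots> = ennreal (pi * (a + b)\<^sup>2)"
    using a b by (simp add: field_simps power2_eq_square flip: ennreal_mult ennreal_plus)
  finally show ?thesis
    unfolding a_def b_def by (rule fock_norm_le) (simp add: fock_norm_nonneg)
qed

section \<open>The Fock space as a Banach space\<close>

typedef fock = Fock2
  using Fock2_0 by blast

setup_lifting type_definition_fock

instantiation fock :: real_vector
begin

lift_definition zero_fock :: fock is "\<lambda>z. 0"
  by (rule Fock2_0)

lift_definition plus_fock :: "fock \<Rightarrow> fock \<Rightarrow> fock" is "\<lambda>f g z. f z + g z"
  by (rule Fock2_add)

lift_definition minus_fock :: "fock \<Rightarrow> fock \<Rightarrow> fock" is "\<lambda>f g z. f z - g z"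
  by (rule Fock2_diff)

lift_definition uminus_fock :: "fock \<Rightarrow> fock" is "\<lambda>f z. - f z"
  by (rule Fock2_uminus)

lift_definition scaleR_fock :: "real \<Rightarrow> fock \<Rightarrow> fock" is "\<lambda>r f z. complex_of_real r * f z"
  by (rule Fock2_cmult)

instance
  by standard (transfer; auto simp: algebra_simps)+

end

lemmas Rep_fock_simps [simp] =
  zero_fock.rep_eq plus_fock.rep_eq minus_fock.rep_eq uminus_fock.rep_eq scaleR_fock.rep_eq

lemma Rep_fock_in_Fock2 [simp]: "Rep_fock x \<in> Fock2"
  using Rep_fock by blast

lemma fock_eq_iff: "x = y \<longleftrightarrow> (\<forall>z. Rep_fock x z = Rep_fock y z)"
  by (auto simp: Rep_fock_inject[symmetric] fun_eq_iff)

instantiation fock :: real_normed_vector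
begin

definition norm_fock :: "fock \<Rightarrow> real" where
  "norm_fock x = fock_norm (Rep_fock x)"

definition dist_fock :: "fock \<Rightarrow> fock \<Rightarrow> real" where
  "dist_fock x y = norm (x - y)"

definition sgn_fock :: "fock \<Rightarrow> fock" where
  "sgn_fock x = x /\<^sub>R norm x"

definition uniformity_fock :: "(fock \<times> fock) filter" where
  "uniformity_fock = (INF e\<in>{0 <..}. principal {(x, y). dist x y < e})"

definition open_fock :: "fock set \<Rightarrow> bool" where
  "open_fock S = (\<forall>x\<in>S. \<forall>\<^sub>F (x', y) in uniformity. x' = x \<longrightarrow> y \<in> S)"

instance
proof
  fix x y :: fock and a :: real
  show "norm x = 0 \<longleftrightarrow> x = 0"
    by (simp add: norm_fock_def fock_norm_eq_0_iff fock_eq_iff fun_eq_iff)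
  show "norm (x + y) \<le> norm x + norm y"
    by (simp add: norm_fock_def fock_norm_triangle)
  show "norm (a *\<^sub>R x) = \<bar>a\<bar> * norm x"
    by (simp add: norm_fock_def fock_norm_cmult)
qed (rule dist_fock_def sgn_fock_def uniformity_fock_def open_fock_def)+

end

lemma bounded_linear_deriv_Rep_fock: "bounded_linear (\<lambda>x. deriv (Rep_fock x) w)"
proof (rule bounded_linear_intro[of _ "exp ((cmod w + 1)\<^sup>2 / 2)"])
  have differentiable: "Rep_fock x field_differentiable at w" for x
    using Fock2_holomorphic[OF Rep_fock_in_Fock2] holomorphic_on_imp_differentiable_at by blast
  show "deriv (Rep_fock (x + y)) w = deriv (Rep_fock x) w + deriv (Rep_fock y) w" for x y
    using deriv_add[OF differentiable differentiable] by (simp add: plus_fock.rep_eq[abs_def])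
  show "deriv (Rep_fock (r *\<^sub>R x)) w = r *\<^sub>R deriv (Rep_fock x) w" for r x
    using deriv_cmult[OF differentiable] by (simp add: scaleR_fock.rep_eq[abs_def] scaleR_conv_of_real)
  show "norm (deriv (Rep_fock x) w) \<le> norm x * exp ((cmod w + 1)\<^sup>2 / 2)" for x
    using norm_deriv_le_fock_norm[OF Rep_fock_in_Fock2] by (simp add: norm_fock_def mult.commute)
qed

lemma uniformly_Cauchy_on_Rep_fock:
  assumes "Cauchy X" and "bounded S"
  shows "uniformly_Cauchy_on S (\<lambda>n. Rep_fock (X n))"
proof (rule uniformly_Cauchy_onI)
  fix e :: real
  assume "e > 0"
  obtain R where R: "\<And>z. z \<in> S \<Longrightarrow> cmod z \<le> R"
    using \<open>bounded S\<close> by (auto simp: bounded_iff)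
  define c where "c = exp (R\<^sup>2 / 2)"
  have "c > 0"
    by (simp add: c_def)
  then obtain M where M: "\<And>m n. m \<ge> M \<Longrightarrow> n \<ge> M \<Longrightarrow> dist (X m) (X n) < e / c"
    using metric_CauchyD[OF \<open>Cauchy X\<close>, of "e / c"] \<open>e > 0\<close> by auto
  have "dist (Rep_fock (X m) z) (Rep_fock (X n) z) < e" if "z \<in> S" "m \<ge> M" "n \<ge> M" for z m n
  proof -
    have "dist (Rep_fock (X m) z) (Rep_fock (X n) z) \<le> exp ((cmod z)\<^sup>2 / 2) * dist (X m) (X n)"
      using norm_le_fock_norm[OF Rep_fock_in_Fock2[of "X m - X n"], of z] by (simp add: dist_norm norm_fock_def)
    also have "\<dots> \<le> c * dist (X m) (X n)"
      using R[OF \<open>z \<in> S\<close>] norm_ge_zero[of z]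
      by (intro mult_right_mono) (simp_all add: c_def power_mono)
    also have "\<dots> < c * (e / c)"
      using M[OF that(2,3)] \<open>c > 0\<close> by (rule mult_strict_left_mono)
    finally show ?thesis
      using \<open>c > 0\<close> by simp
  qed
  then show "\<exists>M. \<forall>z\<in>S. \<forall>m\<ge>M. \<forall>n\<ge>M. dist (Rep_fock (X m) z) (Rep_fock (X n) z) < e"
    by blast
qed

lemma fock_integral_le_if_pointwise_limit:
  assumes lim: "\<And>z. (\<lambda>m. g m z) \<longlonglongrightarrow> f z"
    and [measurable]: "\<And>m. g m \<in> borel_measurable borel"
    and bound: "\<forall>\<^sub>F m in sequentially. fock_integral (g m) \<le> c"
  shows "fock_integral f \<le> c"
proof -
  define u where "u m z = ennreal ((cmod (g m z))\<^sup>2 * exp (- (cmod z)\<^sup>2))" for m z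
  have "u m \<in> borel_measurable lborel" for m
    unfolding u_def by measurable
  have "liminf (\<lambda>m. u m z) = ennreal ((cmod (f z))\<^sup>2 * exp (- (cmod z)\<^sup>2))" for z
    unfolding u_def by (intro lim_imp_Liminf) (auto intro!: tendsto_intros lim)
  then have "fock_integral f = (\<integral>\<^sup>+ z. liminf (\<lambda>m. u m z) \<partial>lborel)"
    by (simp add: fock_integral_def)
  also have "\<dots> \<le> liminf (\<lambda>m. integral\<^sup>N lborel (u m))"
    by (rule nn_integral_liminf) fact
  also have "\<dots> \<le> limsup (\<lambda>m. integral\<^sup>N lborel (u m))"
    by (rule Liminf_le_Limsup) simp
  also have "\<dots> \<le> c"
    by (rule Limsup_bounded) (use bound in \<open>simp add: u_def[abs_def] fock_integral_def\<close>)
  finally show ?thesis .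
qed

lemma Cauchy_fock_uniform_limit_cball:
  assumes "Cauchy X"
  shows "uniform_limit (cball z r) (\<lambda>n. Rep_fock (X n)) (\<lambda>z. lim (\<lambda>n. Rep_fock (X n) z)) sequentially"
  using Cauchy_uniformly_convergent[OF uniformly_Cauchy_on_Rep_fock[OF assms bounded_cball]]
  by (simp add: uniformly_convergent_uniform_limit_iff)

lemma Cauchy_fock_integral_diff_le:
  assumes "Cauchy X" and lim: "\<And>z. (\<lambda>n. Rep_fock (X n) z) \<longlonglongrightarrow> f z" and "e > 0"
  shows "\<exists>M. \<forall>n\<ge>M. fock_integral (\<lambda>z. Rep_fock (X n) z - f z) \<le> ennreal (pi * e\<^sup>2)"
proof -
  obtain M where M: "\<And>m n. m \<ge> M \<Longrightarrow> n \<ge> M \<Longrightarrow> dist (X n) (X m) < e"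
    using metric_CauchyD[OF \<open>Cauchy X\<close> \<open>e > 0\<close>] by (metis dist_commute)
  have "fock_integral (\<lambda>z. Rep_fock (X n) z - f z) \<le> ennreal (pi * e\<^sup>2)" if "n \<ge> M" for n
  proof (rule fock_integral_le_if_pointwise_limit[where g="\<lambda>m. Rep_fock (X n - X m)"])
    show "(\<lambda>m. Rep_fock (X n - X m) z) \<longlonglongrightarrow> Rep_fock (X n) z - f z" for z
      by (simp add: tendsto_diff lim)
    show "Rep_fock (X n - X m) \<in> borel_measurable borel" for m
      by (rule Fock2_borel_measurable[OF Rep_fock_in_Fock2])
    have "fock_integral (Rep_fock (X n - X m)) \<le> ennreal (pi * e\<^sup>2)" if "m \<ge> M" for m
    proof -
      have "fock_norm (Rep_fock (X n - X m)) < e"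
        using M[OF that \<open>n \<ge> M\<close>] by (simp add: dist_norm norm_fock_def del: Rep_fock_simps)
      then have "(fock_norm (Rep_fock (X n - X m)))\<^sup>2 \<le> e\<^sup>2"
        by (intro power_mono) (simp_all add: fock_norm_nonneg)
      then show ?thesis
        by (simp add: fock_integral_eq_fock_norm del: Rep_fock_simps)
    qed
    then show "\<forall>\<^sub>F m in sequentially. fock_integral (Rep_fock (X n - X m)) \<le> ennreal (pi * e\<^sup>2)"
      by (auto simp: eventually_sequentially)
  qed
  then show ?thesis
    by blast
qed

text \<open>A Cauchy sequence converges locally uniformly, so its limit is entire; Fatou's lemma
  shows that it is also the limit in norm.\<close>

instance fock :: banach
proof
  fix X :: "nat \<Rightarrow> fock"
  assume "Cauchy X"
  define f where "f z = lim (\<lambda>n. Rep_fock (X n) z)" for z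
  have uniform: "uniform_limit (cball z 1) (\<lambda>n. Rep_fock (X n)) f sequentially" for z
    unfolding f_def[abs_def] using \<open>Cauchy X\<close> by (rule Cauchy_fock_uniform_limit_cball)
  have pointwise: "(\<lambda>n. Rep_fock (X n) z) \<longlonglongrightarrow> f z" for z
    using uniform[of z] by (rule tendsto_uniform_limitI) simp
  have "f holomorphic_on UNIV"
  proof (rule holomorphic_uniform_sequence[OF open_UNIV])
    show "Rep_fock (X n) holomorphic_on UNIV" for n
      by (rule Fock2_holomorphic) simp
    show "\<exists>d. 0 < d \<and> cball z d \<subseteq> UNIV \<and> uniform_limit (cball z d) (\<lambda>n. Rep_fock (X n)) f sequentially"
      for z
      using uniform[of z] by (intro exI[of _ 1]) simp
  qed
  note close = Cauchy_fock_integral_diff_le[OF \<open>Cauchy X\<close> pointwise]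
  obtain M where "fock_integral (\<lambda>z. Rep_fock (X M) z - f z) \<le> ennreal (pi * 1\<^sup>2)"
    using close[of 1] by auto
  then have "fock_integral (\<lambda>z. Rep_fock (X M) z - f z) < \<infinity>"
    using ennreal_less_top[of "pi * 1\<^sup>2"] by (metis infinity_ennreal_def le_less_trans)
  moreover have "(\<lambda>z. Rep_fock (X M) z - f z) holomorphic_on UNIV"
    by (intro holomorphic_intros Fock2_holomorphic[OF Rep_fock_in_Fock2] \<open>f holomorphic_on UNIV\<close>)
  ultimately have "(\<lambda>z. Rep_fock (X M) z - f z) \<in> Fock2"
    by (simp add: Fock2_def)
  from Fock2_diff[OF Rep_fock_in_Fock2[of "X M"] this] have "f \<in> Fock2"
    by simp
  then have Rep_Abs: "Rep_fock (Abs_fock f) = f"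
    by (rule Abs_fock_inverse)
  have "X \<longlonglongrightarrow> Abs_fock f"
  proof (rule LIMSEQ_I)
    fix r :: real
    assume "r > 0"
    then obtain M where M: "\<And>n. n \<ge> M \<Longrightarrow>
        fock_integral (\<lambda>z. Rep_fock (X n) z - f z) \<le> ennreal (pi * (r / 2)\<^sup>2)"
      using close[of "r / 2"] by auto
    have le: "norm (X n - Abs_fock f) \<le> r / 2" if "n \<ge> M" for n
      unfolding norm_fock_def using M[OF that] \<open>r > 0\<close>
      by (intro fock_norm_le) (simp_all add: Rep_Abs)
    then have "norm (X n - Abs_fock f) < r" if "n \<ge> M" for n
      using le[OF that] \<open>r > 0\<close> by linarith
    then show "\<exists>M. \<forall>n\<ge>M. norm (X n - Abs_fock f) < r"
      by blast
  qed
  then show "convergent X"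
    by (auto simp: convergent_def)
qed

section \<open>Semigroups on the Fock space and their generators\<close>

lemma has_vector_derivative_imp_right_quotient:
  fixes F :: "real \<Rightarrow> 'a::real_normed_vector"
  assumes "(F has_vector_derivative v) (at u within {a..b})" and "a \<le> u" "u < b"
  shows "((\<lambda>t. (1 / t) *\<^sub>R (F (u + t) - F u)) \<longlongrightarrow> v) (at_right 0)"
proof -
  have "((\<lambda>y. (1 / norm (y - u)) *\<^sub>R (F y - (F u + (y - u) *\<^sub>R v))) \<longlongrightarrow> 0) (at u within {a..b})"
    using assms(1) unfolding has_vector_derivative_def has_derivative_within by blast
  moreover have "filterlim (\<lambda>t. u + t) (at u within {a..b}) (at_right 0)"
    unfolding filterlim_at
  proof
    have "\<forall>\<^sub>F t in at_right 0. t < b - u"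
      using assms(3) unfolding eventually_at_right[OF zero_less_one] by (intro exI[of _ "b - u"]) auto
    then show "\<forall>\<^sub>F t in at_right (0::real). u + t \<in> {a..b} \<and> u + t \<noteq> u"
      using eventually_at_right_less[of 0] by eventually_elim (use assms(2) in auto)
    show "((\<lambda>t. u + t) \<longlongrightarrow> u) (at_right 0)"
      by (intro tendsto_eq_intros) (auto intro: tendsto_ident_at)
  qed
  ultimately have "((\<lambda>t. (1 / norm (u + t - u)) *\<^sub>R (F (u + t) - (F u + (u + t - u) *\<^sub>R v)))
      \<longlongrightarrow> 0) (at_right 0)"
    by (rule filterlim_compose)
  moreover have "\<forall>\<^sub>F t in at_right 0. (1 / norm (u + t - u)) *\<^sub>R (F (u + t) - (F u + (u + t - u) *\<^sub>R v))
      = (1 / t) *\<^sub>R (F (u + t) - F u) - v"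
    using eventually_at_right_less[of 0] by eventually_elim (auto simp: algebra_simps)
  ultimately have "((\<lambda>t. (1 / t) *\<^sub>R (F (u + t) - F u) - v) \<longlongrightarrow> 0) (at_right 0)"
    by (rule Lim_transform_eventually)
  then show ?thesis
    by (simp add: LIM_zero_iff)
qed

lemma tendsto_exp_mult_quotient: "((\<lambda>t. (exp (c * t) - 1) / t) \<longlongrightarrow> c) (at_right (0::real))"
proof -
  have "((\<lambda>t. exp (c * t)) has_real_derivative c) (at 0)"
    by (auto intro!: derivative_eq_intros)
  then show ?thesis
    unfolding has_field_derivative_iff by (auto intro: tendsto_mono[OF at_le])
qed

locale fock_semigroup =
  fixes T :: "real \<Rightarrow> (complex \<Rightarrow> complex) \<Rightarrow> (complex \<Rightarrow> complex)" and \<omega> :: real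
  assumes C0: "C0_semigroup_Fock T"
    and norm_T_le: "\<And>t f. t \<ge> 0 \<Longrightarrow> f \<in> Fock2 \<Longrightarrow> fock_norm (T t f) \<le> exp (\<omega> * t) * fock_norm f"
begin

definition T_fock :: "real \<Rightarrow> fock \<Rightarrow> fock" where
  "T_fock t x = Abs_fock (T t (Rep_fock x))"

lemma Rep_T_fock: "t \<ge> 0 \<Longrightarrow> Rep_fock (T_fock t x) = T t (Rep_fock x)"
  using C0 by (simp add: T_fock_def C0_semigroup_Fock_def Abs_fock_inverse)

lemma bounded_linear_T_fock: "t \<ge> 0 \<Longrightarrow> bounded_linear (T_fock t)"
proof (rule bounded_linear_intro[of _ "exp (\<omega> * t)"])
  assume "t \<ge> 0"
  have linear: "T t (\<lambda>z. c * f z + g z) = (\<lambda>z. c * T t f z + T t g z)" if "f \<in> Fock2" "g \<in> Fock2" for c f g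
    using C0 \<open>t \<ge> 0\<close> that unfolding C0_semigroup_Fock_def by blast
  have T_zero: "T t (\<lambda>z. 0) = (\<lambda>z. 0)"
    using linear[OF Fock2_0 Fock2_0, of "-1"] by simp
  show "T_fock t (x + y) = T_fock t x + T_fock t y" "T_fock t (r *\<^sub>R x) = r *\<^sub>R T_fock t x"
    for x y r
    using linear[of "Rep_fock x" "Rep_fock y" 1] linear[of "Rep_fock x" "\<lambda>z. 0" "complex_of_real r"] T_zero
    by (simp_all add: fock_eq_iff Rep_T_fock \<open>t \<ge> 0\<close> Fock2_0)
  show "norm (T_fock t x) \<le> norm x * exp (\<omega> * t)" for x
    using norm_T_le[OF \<open>t \<ge> 0\<close>, of "Rep_fock x"] by (simp add: norm_fock_def Rep_T_fock \<open>t \<ge> 0\<close> mult.commute)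
qed

lemma norm_T_fock_le: "t \<ge> 0 \<Longrightarrow> norm (T_fock t x) \<le> exp (\<omega> * t) * norm x"
  using norm_T_le[of t "Rep_fock x"] by (simp add: norm_fock_def Rep_T_fock)

lemma T_fock_diff: "t \<ge> 0 \<Longrightarrow> T_fock t (x - y) = T_fock t x - T_fock t y"
  by (simp add: bounded_linear_T_fock linear_diff bounded_linear.linear)

lemma T_fock_0 [simp]: "T_fock 0 x = x"
  using C0 by (simp add: fock_eq_iff Rep_T_fock C0_semigroup_Fock_def)

lemma T_fock_add: "s \<ge> 0 \<Longrightarrow> t \<ge> 0 \<Longrightarrow> T_fock (s + t) x = T_fock s (T_fock t x)"
  using C0 by (simp add: fock_eq_iff Rep_T_fock C0_semigroup_Fock_def)

lemma T_fock_tendsto_0: "((\<lambda>t. T_fock t x) \<longlongrightarrow> x) (at_right 0)"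
proof -
  have "((\<lambda>t. fock_norm (\<lambda>z. T t (Rep_fock x) z - Rep_fock x z)) \<longlongrightarrow> 0) (at_right 0)"
    using C0 by (simp add: C0_semigroup_Fock_def)
  moreover have "\<forall>\<^sub>F t in at_right 0. fock_norm (\<lambda>z. T t (Rep_fock x) z - Rep_fock x z) = norm (T_fock t x - x)"
    using eventually_at_right_less[of 0] by eventually_elim (simp add: norm_fock_def Rep_T_fock)
  ultimately show ?thesis
    by (simp add: tendsto_cong tendsto_norm_zero_iff LIM_zero_iff)
qed

lemma norm_T_fock_diff_le:
  assumes "0 \<le> r" "r \<le> s"
  shows "norm (T_fock s x - T_fock r x) \<le> exp (\<bar>\<omega>\<bar> * s) * norm (T_fock (s - r) x - x)"
proof -
  have "norm (T_fock s x - T_fock r x) = norm (T_fock r (T_fock (s - r) x - x))"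
    using T_fock_add[of r "s - r" x] assms by (simp add: T_fock_diff)
  also have "\<dots> \<le> exp (\<omega> * r) * norm (T_fock (s - r) x - x)"
    using assms by (intro norm_T_fock_le) simp
  also have "\<dots> \<le> exp (\<bar>\<omega>\<bar> * s) * norm (T_fock (s - r) x - x)"
  proof -
    have "\<omega> * r \<le> \<bar>\<omega>\<bar> * r"
      using assms by (intro mult_right_mono) auto
    also have "\<dots> \<le> \<bar>\<omega>\<bar> * s"
      using assms by (intro mult_left_mono) auto
    finally show ?thesis
      by (intro mult_right_mono) auto
  qed
  finally show ?thesis .
qed

lemma continuous_on_T_fock: "continuous_on {0..} (\<lambda>t. T_fock t x)"
  unfolding continuous_on_iff
proof (intro ballI allI impI)
  fix s e :: real
  assume "s \<in> {0..}" "e > 0"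
  define M where "M = exp (\<bar>\<omega>\<bar> * (s + 1))"
  have "M > 0"
    by (simp add: M_def)
  with \<open>e > 0\<close> obtain d where "d > 0" and d: "\<And>h. 0 < h \<Longrightarrow> h < d \<Longrightarrow> norm (T_fock h x - x) < e / M"
    using T_fock_tendsto_0[of x, THEN tendstoD, of "e / M"]
    by (auto simp: eventually_at_right_field dist_norm)
  have close: "norm (T_fock b x - T_fock a x) < e" if "0 \<le> a" "a < b" "b - a < d" "b \<le> s + 1" for a b
  proof -
    have "norm (T_fock b x - T_fock a x) \<le> exp (\<bar>\<omega>\<bar> * b) * norm (T_fock (b - a) x - x)"
      by (rule norm_T_fock_diff_le) (use that in auto)
    also have "\<dots> \<le> M * norm (T_fock (b - a) x - x)"
      unfolding M_def using that by (intro mult_right_mono) (auto intro: mult_left_mono)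
    also have "\<dots> < M * (e / M)"
      using d[of "b - a"] that \<open>M > 0\<close> by (intro mult_strict_left_mono) auto
    finally show ?thesis
      using \<open>M > 0\<close> by simp
  qed
  have "dist (T_fock r x) (T_fock s x) < e" if "r \<in> {0..}" "dist r s < min d 1" for r
    using that \<open>s \<in> {0..}\<close> \<open>e > 0\<close> close[of r s] close[of s r]
    by (cases r s rule: linorder_cases) (auto simp: dist_norm dist_real_def norm_minus_commute)
  then show "\<exists>d>0. \<forall>r\<in>{0..}. dist r s < d \<longrightarrow> dist (T_fock r x) (T_fock s x) < e"
    using \<open>d > 0\<close> by (intro exI[of _ "min d 1"]) auto
qed

definition orbit_integral :: "fock \<Rightarrow> real \<Rightarrow> fock" where
  "orbit_integral x \<tau> = integral {0..\<tau>} (\<lambda>s. T_fock s x)"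

lemma orbit_integral_0 [simp]: "orbit_integral x 0 = 0"
  by (simp add: orbit_integral_def)

lemma T_fock_integrable: "0 \<le> a \<Longrightarrow> (\<lambda>s. T_fock s x) integrable_on {a..b}"
  by (rule integrable_continuous_real[OF continuous_on_subset[OF continuous_on_T_fock]]) auto

lemma orbit_integral_right_quotient:
  assumes "0 \<le> u"
  shows "((\<lambda>t. (1 / t) *\<^sub>R (orbit_integral x (u + t) - orbit_integral x u)) \<longlongrightarrow> T_fock u x) (at_right 0)"
proof -
  have "(orbit_integral x has_vector_derivative T_fock u x) (at u within {0..u + 1})"
    unfolding orbit_integral_def[abs_def]
    by (rule integral_has_vector_derivative[OF continuous_on_subset[OF continuous_on_T_fock]])
      (use assms in auto)
  then show ?thesis
    by (rule has_vector_derivative_imp_right_quotient) (use assms in auto)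
qed

lemma T_fock_orbit_integral:
  assumes "0 \<le> t" "0 \<le> \<tau>"
  shows "T_fock t (orbit_integral x \<tau>) = orbit_integral x (t + \<tau>) - orbit_integral x t"
proof -
  have "T_fock t (orbit_integral x \<tau>) = integral {0..\<tau>} (\<lambda>s. T_fock t (T_fock s x))"
    unfolding orbit_integral_def
    by (rule integral_linear[symmetric, OF T_fock_integrable bounded_linear_T_fock, unfolded o_def])
      (use assms in auto)
  also have "\<dots> = integral {0..\<tau>} ((\<lambda>s. T_fock s x) \<circ> (+) t)"
    using assms by (intro integral_cong) (simp add: T_fock_add)
  also have "\<dots> = integral {t..t + \<tau>} (\<lambda>s. T_fock s x)"
    by (simp add: integral_shift_Icc_real add.commute)
  also have "\<dots> = orbit_integral x (t + \<tau>) - orbit_integral x t"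
    unfolding orbit_integral_def
    using Henstock_Kurzweil_Integration.integral_combine[OF _ _ T_fock_integrable, of 0 t "t + \<tau>" x] assms
    by (simp add: algebra_simps)
  finally show ?thesis .
qed

lemma gen_limit_Rep_fock_iff:
  "gen_limit T (Rep_fock x) (Rep_fock y) \<longleftrightarrow> ((\<lambda>t. (1 / t) *\<^sub>R (T_fock t x - x)) \<longlongrightarrow> y) (at_right 0)"
proof -
  have "\<forall>\<^sub>F t in at_right 0.
      fock_norm (\<lambda>z. (T t (Rep_fock x) z - Rep_fock x z) / complex_of_real t - Rep_fock y z)
      = norm ((1 / t) *\<^sub>R (T_fock t x - x) - y)"
    using eventually_at_right_less[of 0]
    by eventually_elim (simp add: norm_fock_def Rep_T_fock divide_inverse mult.commute)
  then show ?thesis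
    unfolding gen_limit_def by (simp add: tendsto_cong tendsto_norm_zero_iff LIM_zero_iff)
qed

lemma gen_limit_unique:
  assumes "f \<in> Fock2" "gen_limit T f g" "gen_limit T f g'"
  shows "g = g'"
proof -
  have "g \<in> Fock2" "g' \<in> Fock2"
    using assms by (simp_all add: gen_limit_def)
  with assms have "((\<lambda>t. (1 / t) *\<^sub>R (T_fock t (Abs_fock f) - Abs_fock f)) \<longlongrightarrow> Abs_fock g) (at_right 0)"
    and "((\<lambda>t. (1 / t) *\<^sub>R (T_fock t (Abs_fock f) - Abs_fock f)) \<longlongrightarrow> Abs_fock g') (at_right 0)"
    by (simp_all add: gen_limit_Rep_fock_iff[symmetric] Abs_fock_inverse)
  then have "Abs_fock g = Abs_fock g'"
    by (rule tendsto_unique[rotated]) simp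
  with \<open>g \<in> Fock2\<close> \<open>g' \<in> Fock2\<close> show ?thesis
    by (simp add: Abs_fock_inject)
qed

lemma gen_limit_orbit_integral:
  assumes "0 < \<tau>"
  shows "gen_limit T (Rep_fock (orbit_integral x \<tau>)) (Rep_fock (T_fock \<tau> x - x))"
proof -
  have "\<forall>\<^sub>F t in at_right 0. (1 / t) *\<^sub>R (T_fock t (orbit_integral x \<tau>) - orbit_integral x \<tau>)
      = (1 / t) *\<^sub>R (orbit_integral x (\<tau> + t) - orbit_integral x \<tau>)
        - (1 / t) *\<^sub>R (orbit_integral x (0 + t) - orbit_integral x 0)"
    using eventually_at_right_less[of 0] by eventually_elim
      (use assms in \<open>simp add: T_fock_orbit_integral algebra_simps add.commute\<close>)
  moreover have "((\<lambda>t. (1 / t) *\<^sub>R (orbit_integral x (\<tau> + t) - orbit_integral x \<tau>)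
      - (1 / t) *\<^sub>R (orbit_integral x (0 + t) - orbit_integral x 0)) \<longlongrightarrow> T_fock \<tau> x - T_fock 0 x) (at_right 0)"
    using assms by (intro tendsto_diff orbit_integral_right_quotient) auto
  ultimately show ?thesis
    unfolding gen_limit_Rep_fock_iff by (simp add: tendsto_cong)
qed

lemma generator_quotient_tendsto:
  assumes gen: "is_generator_Fock T {f \<in> Fock2. (\<lambda>z. G z * deriv f z) \<in> Fock2} (\<lambda>f z. G z * deriv f z)"
  shows "((\<lambda>\<tau>. (Rep_fock (T_fock \<tau> x) w - Rep_fock x w) / \<tau>) \<longlongrightarrow> G w * deriv (Rep_fock x) w) (at_right 0)"
proof -
  have generator_orbit_integral:
    "G w * deriv (Rep_fock (orbit_integral x \<tau>)) w = Rep_fock (T_fock \<tau> x) w - Rep_fock x w"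
    if "0 < \<tau>" for \<tau>
  proof -
    have "gen_limit T (Rep_fock (orbit_integral x \<tau>)) (Rep_fock (T_fock \<tau> x - x))"
      using \<open>0 < \<tau>\<close> by (rule gen_limit_orbit_integral)
    moreover from this have "gen_limit T (Rep_fock (orbit_integral x \<tau>)) (\<lambda>z. G z * deriv (Rep_fock (orbit_integral x \<tau>)) z)"
      using gen by (auto simp: is_generator_Fock_def gen_domain_def)
    ultimately have "(\<lambda>z. G z * deriv (Rep_fock (orbit_integral x \<tau>)) z) = Rep_fock (T_fock \<tau> x - x)"
      by (intro gen_limit_unique) auto
    then show ?thesis
      by (simp add: fun_eq_iff)
  qed
  have "((\<lambda>\<tau>. (1 / \<tau>) *\<^sub>R orbit_integral x \<tau>) \<longlongrightarrow> x) (at_right 0)"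
    using orbit_integral_right_quotient[of 0 x] by simp
  then have "((\<lambda>\<tau>. G w * deriv (Rep_fock ((1 / \<tau>) *\<^sub>R orbit_integral x \<tau>)) w)
      \<longlongrightarrow> G w * deriv (Rep_fock x) w) (at_right 0)"
    by (intro tendsto_mult_left bounded_linear.tendsto[OF bounded_linear_deriv_Rep_fock])
  moreover have "\<forall>\<^sub>F \<tau> in at_right 0. G w * deriv (Rep_fock ((1 / \<tau>) *\<^sub>R orbit_integral x \<tau>)) w
      = (Rep_fock (T_fock \<tau> x) w - Rep_fock x w) / \<tau>"
    using eventually_at_right_less[of 0]
  proof eventually_elim
    case (elim \<tau>)
    have "deriv (Rep_fock ((1 / \<tau>) *\<^sub>R orbit_integral x \<tau>)) w
        = (1 / \<tau>) *\<^sub>R deriv (Rep_fock (orbit_integral x \<tau>)) w"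
      by (rule linear_scale[OF bounded_linear.linear[OF bounded_linear_deriv_Rep_fock]])
    then show ?case
      using generator_orbit_integral[OF elim] by (simp add: scaleR_conv_of_real divide_inverse mult_ac)
  qed
  ultimately show ?thesis
    by (rule Lim_transform_eventually)
qed

lemma Re_T_fock_kernel_le:
  assumes "0 \<le> \<tau>"
  shows "Re (Rep_fock (T_fock \<tau> (Abs_fock (\<lambda>z. exp (cnj w * z)))) w) \<le> exp ((cmod w)\<^sup>2) * exp (\<omega> * \<tau>)"
proof -
  let ?x = "Abs_fock (\<lambda>z. exp (cnj w * z))"
  have norm_x: "norm ?x = exp ((cmod w)\<^sup>2 / 2)"
    by (simp add: norm_fock_def Abs_fock_inverse exp_cnj_mult_Fock2 fock_norm_exp_cnj_mult)
  have "Re (Rep_fock (T_fock \<tau> ?x) w) \<le> exp ((cmod w)\<^sup>2 / 2) * norm (T_fock \<tau> ?x)"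
    using complex_Re_le_cmod norm_le_fock_norm[OF Rep_fock_in_Fock2]
    by (metis norm_fock_def order_trans)
  also have "\<dots> \<le> exp ((cmod w)\<^sup>2 / 2) * (exp (\<omega> * \<tau>) * norm ?x)"
    using assms by (intro mult_left_mono norm_T_fock_le) auto
  also have "\<dots> = exp ((cmod w)\<^sup>2) * exp (\<omega> * \<tau>)"
    unfolding norm_x by (simp add: mult_ac flip: exp_add)
  finally show ?thesis .
qed

lemma Re_mult_cnj_le:
  assumes gen: "is_generator_Fock T {f \<in> Fock2. (\<lambda>z. G z * deriv f z) \<in> Fock2} (\<lambda>f z. G z * deriv f z)"
  shows "Re (G w * cnj w) \<le> \<omega>"
proof -
  define x where "x = Abs_fock (\<lambda>z. exp (cnj w * z))"
  define E where "E = exp ((cmod w)\<^sup>2)"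
  have Rep_x: "Rep_fock x = (\<lambda>z. exp (cnj w * z))"
    by (simp add: x_def Abs_fock_inverse exp_cnj_mult_Fock2)
  have "((\<lambda>\<tau>. (Rep_fock (T_fock \<tau> x) w - E) / \<tau>) \<longlongrightarrow> G w * (cnj w * E)) (at_right 0)"
    using generator_quotient_tendsto[OF gen, of x w]
    by (simp add: Rep_x E_def exp_cnj_mult_self deriv_exp_cnj_mult)
  moreover have "Re (G w * (cnj w * complex_of_real E)) = E * Re (G w * cnj w)"
    by (simp add: mult.assoc[symmetric])
  ultimately have lim_Re: "((\<lambda>\<tau>. Re ((Rep_fock (T_fock \<tau> x) w - E) / \<tau>)) \<longlongrightarrow> E * Re (G w * cnj w))
      (at_right 0)"
    by (metis tendsto_Re)
  have lim_upper: "((\<lambda>\<tau>. E * ((exp (\<omega> * \<tau>) - 1) / \<tau>)) \<longlongrightarrow> E * \<omega>) (at_right 0)"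
    by (rule tendsto_mult_left[OF tendsto_exp_mult_quotient])
  have "\<forall>\<^sub>F \<tau> in at_right 0. Re ((Rep_fock (T_fock \<tau> x) w - E) / \<tau>) \<le> E * ((exp (\<omega> * \<tau>) - 1) / \<tau>)"
    using eventually_at_right_less[of 0]
  proof eventually_elim
    case (elim \<tau>)
    then show ?case
      using Re_T_fock_kernel_le[of \<tau> w]
      by (simp add: x_def E_def Re_divide_of_real divide_right_mono algebra_simps)
  qed
  with lim_upper lim_Re have "E * Re (G w * cnj w) \<le> E * \<omega>"
    by (rule tendsto_le[OF trivial_limit_at_right_real])
  then show ?thesis
    by (simp add: E_def)
qed

end

theorem proposition2p6:
  fixes G :: "complex \<Rightarrow> complex"
    and T :: "real \<Rightarrow> (complex \<Rightarrow> complex) \<Rightarrow> (complex \<Rightarrow> complex)"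
  assumes "G holomorphic_on UNIV"
    and "C0_semigroup_Fock T"
    and "quasicontractive_Fock T"
    and "is_generator_Fock T {f \<in> Fock2. (\<lambda>z. G z * deriv f z) \<in> Fock2}
           (\<lambda>f z. G z * deriv f z)"
  shows "\<exists>a b :: complex. (\<forall>z. G z = a * z + b) \<and> Re a \<le> 0"
proof -
  obtain \<omega> where "\<forall>t\<ge>0. \<forall>f\<in>Fock2. fock_norm (T t f) \<le> exp (\<omega> * t) * fock_norm f"
    using assms(3) unfolding quasicontractive_Fock_def by blast
  with assms(2) interpret fock_semigroup T \<omega>
    by unfold_locales auto
  have "Re (G w * cnj w) \<le> \<omega>" for w
    using assms(4) by (rule Re_mult_cnj_le)
  then show ?thesis
    by (rule entire_affine_if_Re_mult_cnj_bounded[OF assms(1)])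
qed

end
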